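(* Let $(M,d,e)$ be a commutative comonoid in the symmetric monoidal category $\mathcal{C}_G$ of payoff Conway games. Then $M$ is a negative Conway game, i.e. every initial move of $M$ is an Opponent move.
   Context: A Conway game $A=(V_A,E_A,\lambda_A)$ is a rooted directed graph with root $\star_A$ and polarity $\lambda_A:E_A\to\{-1,+1\}$ ($-1$ Opponent, $+1$ Player); an initial move is an edge leaving $\star_A$. Plays are paths from the root; a strategy on $A$ is a set of alternating even-length plays containing the empty play, whose nonempty plays start with an Opponent move, closed under even-length prefixes and deterministic. A payoff game additionally has $\kappa_A=(\kappa^+_A,\kappa^-_A)$ from paths to $\mathbb{N}\times\mathbb{N}$ with: $\lambda_A(m)=-1\Rightarrow\kappa^+_A(m)=0$, $\lambda_A(m)=+1\Rightarrow\kappa^-_A(m)=0$; $\kappa_A(t)\le\kappa_A(s;t)$; $\kappa_A(s;t)\le\kappa_A(s)+\kappa_A(t)$; empty paths have payoff $(0,0)$. $A^*$ reverses polarities and swaps $\kappa^+,\kappa^-$; $A\otimes B$ is the product graph (moves in either component, polarity and payoff summed from projections); $1$ is the one-position game. $\mathcal{C}_G$ has payoff games as objects and as morphisms $A\to B$ the winning strategies on $A^*\otimes B$ (those whose every played path $s$ satisfies $\kappa^+(s)=0\Rightarrow\kappa^-(s)=0$), composed by parallel composition and hiding, with copycat identities; it is symmetric monoidal with $\otimes$, unit $1$ and symmetry $\alpha_{A,B}:A\otimes B\to B\otimes A$ the copycat strategy swapping components. A commutative comonoid is an object $M$ with $d:M\to M\otimes M$ and $e:M\to 1$ satisfying coassociativity,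 counit laws and $d;\alpha_{M,M}=d$. *)

theory Defs
  imports Main
begin

text \<open>A Conway game: a rooted directed (multi)graph with positions Pos, moves (edges) Mv,
  source/target maps, a root, a polarity pol (-1 = Opponent, +1 = Player) and a payoff
  (kp, km) = (kappa+, kappa-) on paths.\<close>

record ('v, 'e) cgame =
  Pos :: "'v set"
  Mv  :: "'e set"
  src :: "'e \<Rightarrow> 'v"
  tgt :: "'e \<Rightarrow> 'v"
  root :: "'v"
  pol :: "'e \<Rightarrow> int"
  kp  :: "'e list \<Rightarrow> nat"
  km  :: "'e list \<Rightarrow> nat"

fun path_from :: "('v, 'e) cgame \<Rightarrow> 'v \<Rightarrow> 'e list \<Rightarrow> bool" where
  "path_from G x [] = True"
| "path_from G x (m # s) = (m \<in> Mv G \<and> src G m = x \<and> path_from G (tgt G m) s)"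

definition is_path :: "('v, 'e) cgame \<Rightarrow> 'e list \<Rightarrow> bool" where
  "is_path G s \<longleftrightarrow> s = [] \<or> path_from G (src G (hd s)) s"

definition play :: "('v, 'e) cgame \<Rightarrow> 'e list \<Rightarrow> bool" where
  "play G s \<longleftrightarrow> path_from G (root G) s"

definition conway_game :: "('v, 'e) cgame \<Rightarrow> bool" where
  "conway_game G \<longleftrightarrow> root G \<in> Pos G \<and>
     (\<forall>m\<in>Mv G. src G m \<in> Pos G \<and> tgt G m \<in> Pos G \<and> pol G m \<in> {-1, 1})"

definition payoff_game :: "('v, 'e) cgame \<Rightarrow> bool" where
  "payoff_game G \<longleftrightarrow> conway_game G
     \<and> (\<forall>m\<in>Mv G. pol G m = -1 \<longrightarrow> kp G [m] = 0)
     \<and> (\<forall>m\<in>Mv G. pol G m = 1 \<longrightarrow> km G [m] = 0)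
     \<and> (\<forall>s t. is_path G (s @ t) \<longrightarrow> kp G t \<le> kp G (s @ t) \<and> km G t \<le> km G (s @ t))
     \<and> (\<forall>s t. is_path G (s @ t) \<longrightarrow>
            kp G (s @ t) \<le> kp G s + kp G t \<and> km G (s @ t) \<le> km G s + km G t)
     \<and> kp G [] = 0 \<and> km G [] = 0"

definition negative_game :: "('v, 'e) cgame \<Rightarrow> bool" where
  "negative_game G \<longleftrightarrow> (\<forall>m\<in>Mv G. src G m = root G \<longrightarrow> pol G m = -1)"

definition dual :: "('v, 'e) cgame \<Rightarrow> ('v, 'e) cgame" where
  "dual G = G\<lparr>pol := (\<lambda>m. - pol G m), kp := km G, km := kp G\<rparr>"

fun projL :: "(('a \<times> 'y) + ('x \<times> 'b)) list \<Rightarrow> 'a list" where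
  "projL [] = []"
| "projL (Inl (a, y) # s) = a # projL s"
| "projL (Inr _ # s) = projL s"

fun projR :: "(('a \<times> 'y) + ('x \<times> 'b)) list \<Rightarrow> 'b list" where
  "projR [] = []"
| "projR (Inl _ # s) = projR s"
| "projR (Inr (x, b) # s) = b # projR s"

text \<open>Tensor product: product graph, a move is a move in one component
  (tagged with the current position of the other component).\<close>
definition tensor :: "('va, 'ea) cgame \<Rightarrow> ('vb, 'eb) cgame
    \<Rightarrow> ('va \<times> 'vb, ('ea \<times> 'vb) + ('va \<times> 'eb)) cgame" where
  "tensor A B = \<lparr>
     Pos = Pos A \<times> Pos B,
     Mv = {Inl (a, y) | a y. a \<in> Mv A \<and> y \<in> Pos B} \<union> {Inr (x, b) | x b. x \<in> Pos A \<and> b \<in> Mv B},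
     src = (\<lambda>e. case e of Inl (a, y) \<Rightarrow> (src A a, y) | Inr (x, b) \<Rightarrow> (x, src B b)),
     tgt = (\<lambda>e. case e of Inl (a, y) \<Rightarrow> (tgt A a, y) | Inr (x, b) \<Rightarrow> (x, tgt B b)),
     root = (root A, root B),
     pol = (\<lambda>e. case e of Inl (a, y) \<Rightarrow> pol A a | Inr (x, b) \<Rightarrow> pol B b),
     kp = (\<lambda>s. kp A (projL s) + kp B (projR s)),
     km = (\<lambda>s. km A (projL s) + km B (projR s)) \<rparr>"

definition unitG :: "(unit, unit) cgame" where
  "unitG = \<lparr> Pos = {()}, Mv = {}, src = (\<lambda>_. ()), tgt = (\<lambda>_. ()), root = (),
             pol = (\<lambda>_. 1), kp = (\<lambda>_. 0), km = (\<lambda>_. 0) \<rparr>"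

definition alt :: "('v, 'e) cgame \<Rightarrow> 'e list \<Rightarrow> bool" where
  "alt G s \<longleftrightarrow> (\<forall>i < length s. pol G (s ! i) = (if even i then -1 else 1))"

definition strategy :: "('v, 'e) cgame \<Rightarrow> 'e list set \<Rightarrow> bool" where
  "strategy G \<sigma> \<longleftrightarrow> [] \<in> \<sigma>
     \<and> (\<forall>s\<in>\<sigma>. play G s \<and> even (length s) \<and> alt G s)
     \<and> (\<forall>s\<in>\<sigma>. \<forall>k. even k \<longrightarrow> take k s \<in> \<sigma>)
     \<and> (\<forall>s m n n'. s @ [m, n] \<in> \<sigma> \<longrightarrow> s @ [m, n'] \<in> \<sigma> \<longrightarrow> n = n')"

definition winning :: "('v, 'e) cgame \<Rightarrow> 'e list set \<Rightarrow> bool" where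
  "winning G \<sigma> \<longleftrightarrow> strategy G \<sigma> \<and> (\<forall>s\<in>\<sigma>. kp G s = 0 \<longrightarrow> km G s = 0)"

definition hom :: "('va, 'ea) cgame \<Rightarrow> ('vb, 'eb) cgame
    \<Rightarrow> (('ea \<times> 'vb) + ('va \<times> 'eb)) list set \<Rightarrow> bool" where
  "hom A B \<sigma> \<longleftrightarrow> winning (tensor (dual A) B) \<sigma>"

definition copycat :: "('va, 'ea) cgame \<Rightarrow> ('vb, 'eb) cgame \<Rightarrow> ('ea \<Rightarrow> 'eb)
    \<Rightarrow> (('ea \<times> 'vb) + ('va \<times> 'eb)) list set" where
  "copycat A B f = {s. play (tensor (dual A) B) s \<and> even (length s) \<and> alt (tensor (dual A) B) s
      \<and> (\<forall>k. even k \<longrightarrow> map f (projL (take k s)) = projR (take k s))}"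

definition idS :: "('v, 'e) cgame \<Rightarrow> (('e \<times> 'v) + ('v \<times> 'e)) list set" where
  "idS A = copycat A A id"

fun swapE :: "('ea \<times> 'vb) + ('va \<times> 'eb) \<Rightarrow> ('eb \<times> 'va) + ('vb \<times> 'ea)" where
  "swapE (Inl (a, y)) = Inr (y, a)"
| "swapE (Inr (x, b)) = Inl (b, x)"

definition symS where
  "symS A B = copycat (tensor A B) (tensor B A) swapE"

fun assocE :: "((('ea \<times> 'vb) + ('va \<times> 'eb)) \<times> 'vc) + (('va \<times> 'vb) \<times> 'ec)
     \<Rightarrow> ('ea \<times> ('vb \<times> 'vc)) + ('va \<times> (('eb \<times> 'vc) + ('vb \<times> 'ec)))" where
  "assocE (Inl (Inl (a, y), z)) = Inl (a, (y, z))"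
| "assocE (Inl (Inr (x, b), z)) = Inr (x, Inl (b, z))"
| "assocE (Inr ((x, y), c)) = Inr (x, Inr (y, c))"

definition assocS where
  "assocS A B C = copycat (tensor (tensor A B) C) (tensor A (tensor B C)) assocE"

definition lunitE :: "(unit \<times> 'v) + (unit \<times> 'e) \<Rightarrow> 'e" where
  "lunitE e = (case e of Inr (_, a) \<Rightarrow> a | Inl _ \<Rightarrow> undefined)"

definition runitE :: "('e \<times> unit) + ('v \<times> unit) \<Rightarrow> 'e" where
  "runitE e = (case e of Inl (a, _) \<Rightarrow> a | Inr _ \<Rightarrow> undefined)"

definition lunitS where
  "lunitS A = copycat (tensor unitG A) A lunitE"

definition runitS where
  "runitS A = copycat (tensor A unitG) A runitE"

text \<open>Interaction sequences are plays of (A (x) B) (x) C; we project them onto the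
  games A* (x) B, B* (x) C and A* (x) C (duality does not change the graph).\<close>

fun projAB :: "(((('ea \<times> 'vb) + ('va \<times> 'eb)) \<times> 'vc) + (('va \<times> 'vb) \<times> 'ec)) list
     \<Rightarrow> (('ea \<times> 'vb) + ('va \<times> 'eb)) list" where
  "projAB [] = []"
| "projAB (Inl (e, z) # u) = e # projAB u"
| "projAB (Inr _ # u) = projAB u"

fun projBC :: "(((('ea \<times> 'vb) + ('va \<times> 'eb)) \<times> 'vc) + (('va \<times> 'vb) \<times> 'ec)) list
     \<Rightarrow> (('eb \<times> 'vc) + ('vb \<times> 'ec)) list" where
  "projBC [] = []"
| "projBC (Inl (Inl _, z) # u) = projBC u"
| "projBC (Inl (Inr (x, b), z) # u) = Inl (b, z) # projBC u"
| "projBC (Inr ((x, y), c) # u) = Inr (y, c) # projBC u"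

fun projAC :: "(((('ea \<times> 'vb) + ('va \<times> 'eb)) \<times> 'vc) + (('va \<times> 'vb) \<times> 'ec)) list
     \<Rightarrow> (('ea \<times> 'vc) + ('va \<times> 'ec)) list" where
  "projAC [] = []"
| "projAC (Inl (Inl (a, y), z) # u) = Inl (a, z) # projAC u"
| "projAC (Inl (Inr _, z) # u) = projAC u"
| "projAC (Inr ((x, y), c) # u) = Inr (x, c) # projAC u"

definition compS :: "('va, 'ea) cgame \<Rightarrow> ('vb, 'eb) cgame \<Rightarrow> ('vc, 'ec) cgame
    \<Rightarrow> (('ea \<times> 'vb) + ('va \<times> 'eb)) list set \<Rightarrow> (('eb \<times> 'vc) + ('vb \<times> 'ec)) list set
    \<Rightarrow> (('ea \<times> 'vc) + ('va \<times> 'ec)) list set" where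
  "compS A B C \<sigma> \<tau> = {projAC u | u. play (tensor (tensor A B) C) u
      \<and> projAB u \<in> \<sigma> \<and> projBC u \<in> \<tau>}"

fun proj1 :: "(((('ea \<times> 'vc) + ('va \<times> 'ec)) \<times> ('vb \<times> 'vd))
       + (('va \<times> 'vc) \<times> (('eb \<times> 'vd) + ('vb \<times> 'ed)))) list
     \<Rightarrow> (('ea \<times> 'vb) + ('va \<times> 'eb)) list" where
  "proj1 [] = []"
| "proj1 (Inl (Inl (a, yc), (yb, yd)) # s) = Inl (a, yb) # proj1 s"
| "proj1 (Inl (Inr _, _) # s) = proj1 s"
| "proj1 (Inr ((xa, xc), Inl (b, yd)) # s) = Inr (xa, b) # proj1 s"
| "proj1 (Inr (_, Inr _) # s) = proj1 s"

fun proj2 :: "(((('ea \<times> 'vc) + ('va \<times> 'ec)) \<times> ('vb \<times> 'vd))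
       + (('va \<times> 'vc) \<times> (('eb \<times> 'vd) + ('vb \<times> 'ed)))) list
     \<Rightarrow> (('ec \<times> 'vd) + ('vc \<times> 'ed)) list" where
  "proj2 [] = []"
| "proj2 (Inl (Inl _, _) # s) = proj2 s"
| "proj2 (Inl (Inr (xa, c), (yb, yd)) # s) = Inl (c, yd) # proj2 s"
| "proj2 (Inr (_, Inl _) # s) = proj2 s"
| "proj2 (Inr ((xa, xc), Inr (yb, d)) # s) = Inr (xc, d) # proj2 s"

definition tensorS :: "('va, 'ea) cgame \<Rightarrow> ('vb, 'eb) cgame \<Rightarrow> ('vc, 'ec) cgame \<Rightarrow> ('vd, 'ed) cgame
    \<Rightarrow> (('ea \<times> 'vb) + ('va \<times> 'eb)) list set \<Rightarrow> (('ec \<times> 'vd) + ('vc \<times> 'ed)) list set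
    \<Rightarrow> (((('ea \<times> 'vc) + ('va \<times> 'ec)) \<times> ('vb \<times> 'vd))
        + (('va \<times> 'vc) \<times> (('eb \<times> 'vd) + ('vb \<times> 'ed)))) list set" where
  "tensorS A B C D \<sigma> \<tau> = {s. play (tensor (dual (tensor A C)) (tensor B D)) s \<and> even (length s)
      \<and> alt (tensor (dual (tensor A C)) (tensor B D)) s \<and> proj1 s \<in> \<sigma> \<and> proj2 s \<in> \<tau>}"

definition comm_comonoid :: "('v, 'e) cgame
    \<Rightarrow> (('e \<times> ('v \<times> 'v)) + ('v \<times> (('e \<times> 'v) + ('v \<times> 'e)))) list set
    \<Rightarrow> (('e \<times> unit) + ('v \<times> unit)) list set \<Rightarrow> bool" where
  "comm_comonoid M d e \<longleftrightarrow>
     payoff_game M \<and> hom M (tensor M M) d \<and> hom M unitG e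
     \<comment> \<open>coassociativity: d ; (d (x) id) ; assoc = d ; (id (x) d)\<close>
     \<and> compS M (tensor M M) (tensor M (tensor M M)) d
         (compS (tensor M M) (tensor (tensor M M) M) (tensor M (tensor M M))
            (tensorS M (tensor M M) M M d (idS M)) (assocS M M M))
       = compS M (tensor M M) (tensor M (tensor M M)) d
           (tensorS M M M (tensor M M) (idS M) d)
     \<comment> \<open>counit laws: d ; (e (x) id) ; lambda = id  and  d ; (id (x) e) ; rho = id\<close>
     \<and> compS M (tensor M M) M d
         (compS (tensor M M) (tensor unitG M) M (tensorS M unitG M M e (idS M)) (lunitS M))
       = idS M
     \<and> compS M (tensor M M) M d
         (compS (tensor M M) (tensor M unitG) M (tensorS M M M unitG (idS M) e) (runitS M))
       = idS M
     \<comment> \<open>commutativity: d ; alpha = d\<close>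
     \<and> compS M (tensor M M) (tensor M M) d (symS M M) = d"

end

theory Submission
  imports Defs
begin

text \<open>Suppose M had an initial Player move m. Copycat on M* (x) M answers the Opponent move m
  of M* by m in M, so by the left counit law this two-move play lies in d ; ((e (x) id) ; lambda).
  All strategies involved open with Opponent moves, so an interaction witnessing the composite
  cannot open in the middle game M (x) M; it opens with m, and d must answer m inside M (x) M,
  by an initial Player move b, since no further move of M* is visible.
  Composing with the symmetry, d = d ; alpha also answers m by the swapped move of b, which lies
  in the other component: this contradicts the determinism of d.\<close>

lemma tensor_simps [simp]:
  "Mv (tensor A B) = {Inl (a, y) | a y. a \<in> Mv A \<and> y \<in> Pos B} \<union> {Inr (x, b) | x b. x \<in> Pos A \<and> b \<in> Mv B}"
  "Pos (tensor A B) = Pos A \<times> Pos B"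
  "root (tensor A B) = (root A, root B)"
  "src (tensor A B) (Inl (a, y)) = (src A a, y)"
  "src (tensor A B) (Inr (x, b)) = (x, src B b)"
  "tgt (tensor A B) (Inl (a, y)) = (tgt A a, y)"
  "tgt (tensor A B) (Inr (x, b)) = (x, tgt B b)"
  "pol (tensor A B) (Inl (a, y)) = pol A a"
  "pol (tensor A B) (Inr (x, b)) = pol B b"
  by (simp_all add: tensor_def)

lemma dual_simps [simp]:
  "Mv (dual A) = Mv A" "Pos (dual A) = Pos A" "root (dual A) = root A"
  "src (dual A) = src A" "tgt (dual A) = tgt A" "pol (dual A) m = - pol A m"
  by (simp_all add: dual_def)

lemma conway_gameD:
  assumes "conway_game G"
  shows "root G \<in> Pos G"
    and "m \<in> Mv G \<Longrightarrow> src G m \<in> Pos G"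
    and "m \<in> Mv G \<Longrightarrow> tgt G m \<in> Pos G"
    and "m \<in> Mv G \<Longrightarrow> pol G m \<in> {-1, 1}"
  using assms by (auto simp: conway_game_def)

lemma conway_game_tensor:
  assumes "conway_game A" "conway_game B"
  shows "conway_game (tensor A B)"
  using assms by (auto simp: conway_game_def)

lemma swapE_in_Mv_tensor: "b \<in> Mv (tensor A B) \<Longrightarrow> swapE b \<in> Mv (tensor B A)"
  by auto

lemma src_swapE [simp]: "src (tensor B A) (swapE b) = prod.swap (src (tensor A B) b)"
  by (cases b) auto

lemma pol_swapE [simp]: "pol (tensor B A) (swapE b) = pol (tensor A B) b"
  by (cases b) auto

lemma swapE_neq [simp]: "swapE (b :: ('e \<times> 'v) + ('v \<times> 'e)) \<noteq> b"
  by (cases b) auto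

lemma strategy_deterministic_answer:
  "strategy G \<sigma> \<Longrightarrow> [x, y] \<in> \<sigma> \<Longrightarrow> [x, y'] \<in> \<sigma> \<Longrightarrow> y = y'"
  unfolding strategy_def by (metis append_Nil)

lemma strategy_opening_answer:
  assumes "strategy (tensor (dual A) B) \<sigma>" "[Inl (a, y), Inr (x, b)] \<in> \<sigma>"
  shows "a \<in> Mv A" "src A a = root A" "y = root B" "x = tgt A a" "x \<in> Pos A"
    and "b \<in> Mv B" "src B b = root B" "pol B b = 1"
  using assms(1)[unfolded strategy_def, THEN conjunct2, THEN conjunct1, rule_format, OF assms(2)]
  unfolding play_def alt_def by (auto dest: spec[of _ 1])

lemma copycat_copies_opening:
  assumes "conway_game B" "conway_game C"
    and "b \<in> Mv B" "src B b = root B" "pol B b = 1"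
    and "f b \<in> Mv C" "src C (f b) = root C" "pol C (f b) = 1"
  shows "[Inl (b, root C), Inr (tgt B b, f b)] \<in> copycat B C f"
proof -
  let ?s = "[Inl (b, root C), Inr (tgt B b, f b)]"
  have "play (tensor (dual B) C) ?s"
    using assms by (auto simp: play_def conway_gameD)
  moreover have "alt (tensor (dual B) C) ?s"
    using assms by (auto simp: alt_def less_Suc_eq)
  moreover have "map f (projL (take k ?s)) = projR (take k ?s)" if "even k" for k
  proof -
    from \<open>even k\<close> have "k = 0 \<or> k \<ge> 2" by presburger
    then show ?thesis by auto
  qed
  ultimately show ?thesis unfolding copycat_def by simp
qed

definition opponent_opens :: "('v, 'e) cgame \<Rightarrow> 'e list set \<Rightarrow> bool" where
  "opponent_opens G \<sigma> \<longleftrightarrow> (\<forall>s\<in>\<sigma>. s \<noteq> [] \<longrightarrow> pol G (hd s) = -1)"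

lemma opponent_opens_if_alt: "(\<And>s. s \<in> \<sigma> \<Longrightarrow> alt G s) \<Longrightarrow> opponent_opens G \<sigma>"
  unfolding opponent_opens_def alt_def by (metis hd_conv_nth length_greater_0_conv even_zero)

lemma opponent_opensD: "opponent_opens G \<sigma> \<Longrightarrow> m # s \<in> \<sigma> \<Longrightarrow> pol G m = -1"
  unfolding opponent_opens_def by force

lemma strategy_opponent_opens: "strategy G \<sigma> \<Longrightarrow> opponent_opens G \<sigma>"
  by (rule opponent_opens_if_alt) (auto simp: strategy_def)

lemma interaction_move_cases:
  obtains (A) a y z where "x = Inl (Inl (a, y), z)"
  | (B) x' b z where "x = Inl (Inr (x', b), z)"
  | (C) x' y c where "x = Inr ((x', y), c)"
  by (metis sum.exhaust prod.exhaust)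

text \<open>A move of the middle game B is seen with opposite polarities by the two components.\<close>

lemma interaction_not_opened_in_middle:
  assumes "opponent_opens (tensor (dual A) B) \<sigma>" "opponent_opens (tensor (dual B) C) \<tau>"
    and "projAB (Inl (Inr (x, b), z) # u) \<in> \<sigma>" "projBC (Inl (Inr (x, b), z) # u) \<in> \<tau>"
  shows False
  using opponent_opensD[OF assms(1)] opponent_opensD[OF assms(2)] assms(3,4) by force

lemma compS_opponent_opens:
  assumes "opponent_opens (tensor (dual A) B) \<sigma>" "opponent_opens (tensor (dual B) C) \<tau>"
  shows "opponent_opens (tensor (dual A) C) (compS A B C \<sigma> \<tau>)"
  unfolding opponent_opens_def compS_def
proof clarify
  fix u assume u: "projAC u \<noteq> []" "projAB u \<in> \<sigma>" "projBC u \<in> \<tau>"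
  then obtain x u' where x: "u = x # u'" by (cases u) auto
  show "pol (tensor (dual A) C) (hd (projAC u)) = -1"
  proof (cases x rule: interaction_move_cases)
    case (A a y z)
    then have "Inl (a, y) # projAB u' \<in> \<sigma>" using u(2) x by simp
    then have "pol (tensor (dual A) B) (Inl (a, y)) = -1" by (rule opponent_opensD[OF assms(1)])
    then show ?thesis using A x by simp
  next
    case (B x' b z)
    then show ?thesis using interaction_not_opened_in_middle[OF assms, of x' b z u'] u x by simp
  next
    case (C x' y c)
    then have "Inr (y, c) # projBC u' \<in> \<tau>" using u(3) x by simp
    then have "pol (tensor (dual B) C) (Inr (y, c)) = -1" by (rule opponent_opensD[OF assms(2)])
    then show ?thesis using C x by simp
  qed
qed

lemma projAB_no_Inl_if_projAC_no_Inl: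
  "\<forall>y\<in>set (projAC u). \<not> isl y \<Longrightarrow> \<forall>x\<in>set (projAB u). \<not> isl x"
  by (induction u rule: projAC.induct) auto

lemma compS_opening_answered_in_middle:
  assumes \<sigma>: "strategy (tensor (dual A) B) \<sigma>"
    and \<tau>: "opponent_opens (tensor (dual B) C) \<tau>"
    and comp: "Inl (a, z) # t \<in> compS A B C \<sigma> \<tau>"
    and no_A: "\<forall>w\<in>set t. \<not> isl w"
  shows "\<exists>b. [Inl (a, root B), Inr (tgt A a, b)] \<in> \<sigma>"
proof -
  obtain u where uAB: "projAB u \<in> \<sigma>" and uBC: "projBC u \<in> \<tau>"
    and uAC: "projAC u = Inl (a, z) # t"
    using comp unfolding compS_def by force
  then obtain x u' where u: "u = x # u'" by (cases u) auto
  obtain y where x: "x = Inl (Inl (a, y), z)" and u'AC: "projAC u' = t"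
  proof (cases x rule: interaction_move_cases)
    case A
    then show ?thesis using that uAC u by auto
  next
    case (B x' b z')
    then show ?thesis
      using interaction_not_opened_in_middle[OF strategy_opponent_opens[OF \<sigma>] \<tau>, of x' b z' u']
        uAB uBC u by simp
  next
    case C
    then show ?thesis using uAC u by auto
  qed
  have "even (length (projAB u))" using \<sigma> uAB unfolding strategy_def by auto
  then obtain w rest where u'AB: "projAB u' = w # rest" using u x by (cases "projAB u'") auto
  moreover have "\<forall>w\<in>set (projAB u'). \<not> isl w"
    using projAB_no_Inl_if_projAC_no_Inl u'AC no_A by blast
  ultimately obtain x' b where w: "w = Inr (x', b)"
    by (cases w) (auto simp: prod.exhaust)
  have "take 2 (projAB u) \<in> \<sigma>" using \<sigma> uAB unfolding strategy_def by auto
  then have answer: "[Inl (a, y), Inr (x', b)] \<in> \<sigma>" using u x u'AB w by simp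
  with strategy_opening_answer[OF \<sigma> answer] show ?thesis by auto
qed

lemma compS_copycat_opening_answer:
  assumes \<sigma>: "strategy (tensor (dual A) B) \<sigma>" and games: "conway_game B" "conway_game C"
    and answer: "[Inl (a, root B), Inr (x, b)] \<in> \<sigma>"
    and f: "f b \<in> Mv C" "src C (f b) = root C" "pol C (f b) = pol B b"
  shows "[Inl (a, root C), Inr (x, f b)] \<in> compS A B C \<sigma> (copycat B C f)"
proof -
  note first_moves = strategy_opening_answer[OF \<sigma> answer]
  define u where "u = [Inl (Inl (a, root B), root C), Inl (Inr (x, b), root C),
    Inr ((x, tgt B b), f b)]"
  have "play (tensor (tensor A B) C) u"
    using first_moves games f by (auto simp: u_def play_def conway_gameD)
  moreover have "projAB u \<in> \<sigma>" using answer by (simp add: u_def)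
  moreover have "projBC u \<in> copycat B C f"
    using copycat_copies_opening[OF games, of b f] first_moves f by (simp add: u_def)
  ultimately show ?thesis unfolding compS_def by (force simp: u_def)
qed

theorem mainTheorem6:
  fixes M :: "('v, 'e) cgame"
    and d :: "(('e \<times> ('v \<times> 'v)) + ('v \<times> (('e \<times> 'v) + ('v \<times> 'e)))) list set"
    and e :: "(('e \<times> unit) + ('v \<times> unit)) list set"
  assumes "comm_comonoid M d e"
  shows "negative_game M"
  unfolding negative_game_def
proof (intro ballI impI)
  fix m assume m: "m \<in> Mv M" "src M m = root M"
  let ?\<tau> = "compS (tensor M M) (tensor unitG M) M (tensorS M unitG M M e (idS M)) (lunitS M)"
  have M: "conway_game M" and MM: "conway_game (tensor M M)"
    and d: "strategy (tensor (dual M) (tensor M M)) d"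
    and counit: "compS M (tensor M M) M d ?\<tau> = idS M"
    and comm: "compS M (tensor M M) (tensor M M) d (symS M M) = d"
    using assms conway_game_tensor
    by (auto simp: comm_comonoid_def payoff_game_def hom_def winning_def)
  have \<tau>: "opponent_opens (tensor (dual (tensor M M)) M) ?\<tau>"
    by (intro compS_opponent_opens opponent_opens_if_alt)
      (auto simp: tensorS_def lunitS_def copycat_def)
  show "pol M m = -1"
  proof (rule ccontr)
    assume "pol M m \<noteq> -1"
    with conway_gameD(4)[OF M m(1)] have player: "pol M m = 1" by simp
    have "[Inl (m, root M), Inr (tgt M m, m)] \<in> idS M"
      using copycat_copies_opening[OF M M m player, where f = id] m player
      unfolding idS_def by simp
    then have "[Inl (m, root M), Inr (tgt M m, m)] \<in> compS M (tensor M M) M d ?\<tau>"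
      by (simp only: counit)
    then obtain b where b: "[Inl (m, root (tensor M M)), Inr (tgt M m, b)] \<in> d"
      using compS_opening_answered_in_middle[OF d \<tau>] by fastforce
    note first_moves = strategy_opening_answer[OF d b]
    have "swapE b \<in> Mv (tensor M M)" using swapE_in_Mv_tensor first_moves by blast
    then have "[Inl (m, root (tensor M M)), Inr (tgt M m, swapE b)]
        \<in> compS M (tensor M M) (tensor M M) d (symS M M)"
      unfolding symS_def using first_moves
      by (intro compS_copycat_opening_answer[OF d MM MM b]) simp_all
    then have "[Inl (m, root (tensor M M)), Inr (tgt M m, swapE b)] \<in> d" by (simp only: comm)
    from strategy_deterministic_answer[OF d b this] show False using swapE_neq[of b] by simp
  qed
qed

end
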